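(* Let $C_m=\frac{1}{m+1}\binom{2m}{m}$ denote the $m$-th Catalan number and, for $i\ge1$, let $\alpha_i=C_{i-1}+\delta_{i,1}$, where $\delta_{i,1}$ is $1$ if $i=1$ and $0$ otherwise. Then for every integer $d\ge1$, $$\binom{2d}{d}=\sum_{\mathcal P}\alpha_{a_1}\alpha_{a_2}\cdots\alpha_{a_k},$$ where the sum is over all cyclic compositions $\mathcal P$ of $d$ (into any number $k\ge1$ of parts) and $a_1,\dots,a_k$ are the sizes of the parts of $\mathcal P$.
   Context: For $d\ge1$ let $C_d$ (the cycle graph) have vertex set $\mathbb Z_d$ and the $d$ edges $\{i,i+1\}$, $i\in\mathbb Z_d$ (a loop if $d=1$, two parallel edges if $d=2$). A cyclic composition of $d$ into $k$ parts ($1\le k\le d$) is a choice of a $k$-element subset of the $d$ edges of the cycle to delete; its parts are the $k$ connected components (each a path) of the remaining graph, and the size of a part is its number of vertices. There are $\binom dk$ cyclic compositions of $d$ into $k$ parts, hence $2^d-1$ cyclic compositions of $d$ in total. *)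

theory Defs
  imports Main
begin

text \<open>Catalan number C_m = binom(2m,m)/(m+1) (the division is exact).\<close>
definition catalan :: "nat \<Rightarrow> nat" where
  "catalan m = ((2*m) choose m) div (m + 1)"

definition alpha :: "nat \<Rightarrow> nat" where
  "alpha i = catalan (i - 1) + (if i = 1 then 1 else 0)"

text \<open>The cycle C_d has vertices {0..<d} (= Z_d) and edges e_i = {i, i+1 mod d}, i < d.
  A cyclic composition is a nonempty set S of deleted edges (indices in {0..<d}).
  For a deleted edge s in S, the component of the remaining graph starting at vertex
  s+1 consists of the vertices s+1, ..., s+t (mod d), where t is the cyclic distance
  to the next deleted edge.  These components are exactly the parts, in bijection with S.\<close>
definition cyc_gap :: "nat \<Rightarrow> nat set \<Rightarrow> nat \<Rightarrow> nat" where
  "cyc_gap d S s = (LEAST t. 0 < t \<and> (s + t) mod d \<in> S)"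

definition cyc_part :: "nat \<Rightarrow> nat set \<Rightarrow> nat \<Rightarrow> nat set" where
  "cyc_part d S s = {(s + j) mod d | j. 1 \<le> j \<and> j \<le> cyc_gap d S s}"

definition cyclic_compositions :: "nat \<Rightarrow> nat set set" where
  "cyclic_compositions d = {S. S \<subseteq> {..<d} \<and> S \<noteq> {}}"

end

theory Submission
  imports Defs "HOL-Computational_Algebra.Formal_Power_Series"
begin

text \<open>Let B(x) = \<Sum> binom(2n,n) x^n and F(x) = \<Sum> alpha_i x^i = x + x C(x), where C is the Catalan
  series. From (1 - 4x) B' = 2B one gets (1 - 4x) B^2 = 1 and, comparing derivatives,
  2F = 1 + 2x - (1 - 4x) B; together these give x F' / (1 - F) = B - 1.
  Combinatorially, a cyclic composition of d consists of the part wrapping around vertex 0,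
  of some size i and in one of i positions, together with a linear composition of the remaining
  d - i vertices; as linear compositions weighted by alpha are counted by 1 / (1 - F), the sum in
  question is the coefficient of x^d in x F' / (1 - F), which is binom(2d,d).\<close>

unbundle fps_syntax

lemma Suc_times_choose_Suc_central: "Suc n * ((2*n) choose (Suc n)) = n * ((2*n) choose n)"
proof -
  have "Suc n * ((2*n) choose (Suc n)) = 2*n * ((2*n - 1) choose n)" by (rule binomial_absorption)
  also have "\<dots> = (2*n - n) * ((2*n) choose n)" by (rule binomial_absorb_comp[symmetric])
  finally show ?thesis by simp
qed

lemma Suc_times_central_binomial_Suc:
  "Suc n * ((2 * Suc n) choose Suc n) = 2 * (2*n + 1) * ((2*n) choose n)"
proof -
  have "Suc n * ((2 * Suc n) choose Suc n) = 2 * (Suc n * ((2*n + 1) choose n))"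
    using Suc_times_binomial[of n "2*n+1"] by simp
  also have "Suc n * ((2*n + 1) choose n) = (2*n + 1) * ((2*n) choose n)"
    using binomial_absorb_comp[of "2*n+1" n] by (simp add: Suc_diff_le)
  finally show ?thesis by simp
qed

lemma Suc_times_catalan: "Suc n * catalan n = (2*n) choose n"
proof -
  define c where "c = ((2*n) choose n) - ((2*n) choose (Suc n))"
  have "(2*n) choose n = Suc n * c"
    using Suc_times_choose_Suc_central[of n] unfolding c_def by (simp add: diff_mult_distrib2)
  then show ?thesis
    unfolding catalan_def by (simp only: Suc_eq_plus1[symmetric] nonzero_mult_div_cancel_left nat.distinct(1))
qed

definition central_binomial_fps :: "'a::field_char_0 fps" where
  "central_binomial_fps = Abs_fps (\<lambda>n. of_nat ((2*n) choose n))"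

definition alpha_fps :: "'a::field_char_0 fps" where
  "alpha_fps = Abs_fps (\<lambda>n. if n = 0 then 0 else of_nat (alpha n))"

lemma central_binomial_fps_deriv:
  "(1 - 4 * fps_X) * fps_deriv central_binomial_fps = 2 * (central_binomial_fps :: 'a::field_char_0 fps)"
proof (rule fps_ext)
  fix n
  let ?B = "central_binomial_fps :: 'a fps"
  define b :: "nat \<Rightarrow> 'a" where "b k = of_nat ((2*k) choose k)" for k
  have B: "?B $ k = b k" for k
    by (simp add: central_binomial_fps_def b_def)
  have rec: "of_nat (Suc n) * b (Suc n) = 2 * (2 * of_nat n + 1) * b n"
    unfolding b_def of_nat_mult[symmetric] Suc_times_central_binomial_Suc by (simp add: algebra_simps)
  have "((1 - 4 * fps_X) * fps_deriv ?B) $ n = of_nat (Suc n) * b (Suc n) - 4 * (of_nat n * b n)"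
    by (cases n) (simp_all add: B algebra_simps numeral_fps_const)
  also have "\<dots> = (2 * ?B) $ n"
    unfolding rec by (simp add: B numeral_fps_const algebra_simps)
  finally show "((1 - 4 * fps_X) * fps_deriv ?B) $ n = (2 * ?B) $ n" .
qed

lemma central_binomial_fps_square:
  "(1 - 4 * fps_X) * central_binomial_fps^2 = (1 :: 'a::field_char_0 fps)"
proof -
  let ?B = "central_binomial_fps :: 'a fps"
  have "fps_deriv ((1 - 4 * fps_X) * ?B^2) = 2 * ?B * ((1 - 4 * fps_X) * fps_deriv ?B) - 4 * ?B^2"
    by (simp add: algebra_simps power2_eq_square)
  also have "\<dots> = 0"
    unfolding central_binomial_fps_deriv by (simp add: power2_eq_square)
  finally have "(1 - 4 * fps_X) * ?B^2 = fps_const (((1 - 4 * fps_X) * ?B^2) $ 0)"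
    unfolding fps_deriv_eq_0_iff .
  then show ?thesis
    by (simp add: central_binomial_fps_def power2_eq_square)
qed

lemma alpha_fps_nth: "alpha_fps $ n = (if n = 0 then 0 else of_nat (alpha n))"
  by (simp add: alpha_fps_def)

lemma fps_deriv_alpha_fps: "fps_deriv alpha_fps = 1 + (central_binomial_fps :: 'a::field_char_0 fps)"
proof (rule fps_ext)
  fix n
  have "of_nat (Suc n) * of_nat (alpha (Suc n)) = (of_nat ((2*n) choose n) + (if n = 0 then 1 else 0) :: 'a)"
    unfolding of_nat_mult[symmetric] Suc_times_catalan[symmetric] by (simp add: alpha_def)
  then show "fps_deriv alpha_fps $ n = (1 + central_binomial_fps :: 'a fps) $ n"
    by (simp add: alpha_fps_nth central_binomial_fps_def)
qed

lemma alpha_fps_closed_form: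
  "2 * alpha_fps = 1 + 2 * fps_X - (1 - 4 * fps_X) * (central_binomial_fps :: 'a::field_char_0 fps)"
proof -
  have "fps_deriv (2 * alpha_fps) = fps_deriv (1 + 2 * fps_X - (1 - 4 * fps_X) * (central_binomial_fps :: 'a fps))"
    using central_binomial_fps_deriv by (simp add: fps_deriv_alpha_fps algebra_simps)
  then show ?thesis
    unfolding fps_deriv_eq_iff by (simp add: alpha_fps_nth central_binomial_fps_def)
qed

lemma fps_X_deriv_alpha_fps:
  "fps_X * fps_deriv alpha_fps = (central_binomial_fps - 1) * (1 - alpha_fps :: 'a::field_char_0 fps)"
proof -
  let ?B = "central_binomial_fps :: 'a fps"
  have "2 * ((?B - 1) * (1 - alpha_fps)) = (?B - 1) * (2 - 2 * alpha_fps)"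
    by (simp add: algebra_simps)
  also have "\<dots> = (?B - 1) * (1 - 2 * fps_X + (1 - 4 * fps_X) * ?B)"
    unfolding alpha_fps_closed_form by (simp add: algebra_simps)
  also have "\<dots> = 2 * (fps_X * (1 + ?B)) + ((1 - 4 * fps_X) * ?B^2 - 1)"
    by (simp add: algebra_simps power2_eq_square)
  also have "\<dots> = 2 * (fps_X * fps_deriv alpha_fps)"
    by (simp add: central_binomial_fps_square fps_deriv_alpha_fps)
  finally show ?thesis by simp
qed

lemma central_binomial_fps_minus_one:
  "central_binomial_fps - 1 = fps_X * fps_deriv alpha_fps * inverse (1 - alpha_fps :: 'a::field_char_0 fps)"
proof -
  have "(1 - alpha_fps :: 'a fps) * inverse (1 - alpha_fps) = 1"
    by (rule inverse_mult_eq_1') (simp add: alpha_fps_nth)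
  then show ?thesis
    by (simp add: fps_X_deriv_alpha_fps mult.assoc)
qed

lemma fps_X_deriv_mult_nth:
  fixes f g :: "'a::comm_semiring_1 fps"
  shows "(fps_X * fps_deriv f * g) $ n = (\<Sum>i=0..n. of_nat i * f $ i * g $ (n - i))"
  unfolding fps_mult_nth[of "fps_X * fps_deriv f"]
  by (intro sum.cong refl) (auto simp: gr0_conv_Suc)

lemma inverse_one_minus_fps_nth:
  fixes F :: "'a::field fps"
  assumes "F $ 0 = 0"
  shows "inverse (1 - F) $ 0 = 1"
    and "0 < n \<Longrightarrow> inverse (1 - F) $ n = (\<Sum>k=1..n. F $ k * inverse (1 - F) $ (n - k))"
proof -
  let ?L = "inverse (1 - F)"
  show "?L $ 0 = 1" using assms by simp
  assume "0 < n"
  have "(1 - F) * ?L = 1"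
    by (rule inverse_mult_eq_1') (simp add: assms)
  then have "?L = 1 + F * ?L"
    by (simp add: algebra_simps)
  then have "?L $ n = (F * ?L) $ n"
    using \<open>0 < n\<close> by (metis add_0 fps_one_nth fps_add_nth not_gr0)
  also have "\<dots> = (\<Sum>k=1..n. F $ k * ?L $ (n - k))"
    unfolding fps_mult_nth using assms by (simp add: sum.atLeast_Suc_atMost)
  finally show "?L $ n = (\<Sum>k=1..n. F $ k * ?L $ (n - k))" .
qed

definition next_gap :: "nat set \<Rightarrow> nat \<Rightarrow> nat" where
  "next_gap U s = (LEAST t. 0 < t \<and> s + t \<in> U)"

text \<open>A set U = {u_0 < ... < u_k} with u_0 = a and u_k = e encodes the linear composition
  (u_1 - u_0, ..., u_k - u_(k-1)) of e - a, and gap_weight f U is its weight.\<close>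
definition spanning_subsets :: "nat \<Rightarrow> nat \<Rightarrow> nat set set" where
  "spanning_subsets a e = {U. U \<subseteq> {a..e} \<and> a \<in> U \<and> e \<in> U}"

definition gap_weight :: "(nat \<Rightarrow> 'a::comm_semiring_1) \<Rightarrow> nat set \<Rightarrow> 'a" where
  "gap_weight f U = (\<Prod>s\<in>U - {Max U}. f (next_gap U s))"

lemma finite_spanning_subsets: "finite (spanning_subsets a e)"
  unfolding spanning_subsets_def by (rule finite_subset[of _ "Pow {a..e}"]) auto

lemma finite_if_spanning_subset: "U \<in> spanning_subsets a e \<Longrightarrow> finite U"
  unfolding spanning_subsets_def using finite_subset by blast

lemma spanning_subsets_same [simp]: "spanning_subsets a a = {{a}}"
  unfolding spanning_subsets_def by auto

lemma Min_spanning_subset: "U \<in> spanning_subsets a e \<Longrightarrow> Min U = a"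
  by (rule Min_eqI) (auto simp: spanning_subsets_def finite_if_spanning_subset)

lemma Max_spanning_subset: "U \<in> spanning_subsets a e \<Longrightarrow> Max U = e"
  by (rule Max_eqI) (auto simp: spanning_subsets_def finite_if_spanning_subset)

lemma spanning_subsets_insert_eq:
  assumes "a < e"
  shows "spanning_subsets a e = insert a ` (\<Union>b\<in>{a<..e}. spanning_subsets b e)"
proof
  show "spanning_subsets a e \<subseteq> insert a ` (\<Union>b\<in>{a<..e}. spanning_subsets b e)"
  proof
    fix U assume U: "U \<in> spanning_subsets a e"
    let ?V = "U - {a}"
    have fin: "finite ?V" and ne: "?V \<noteq> {}"
      using U assms finite_if_spanning_subset[OF U] unfolding spanning_subsets_def by auto
    have "Min ?V \<in> {a<..e}" "?V \<in> spanning_subsets (Min ?V) e"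
      using U assms Min_in[OF fin ne] Min_le[OF fin] unfolding spanning_subsets_def
      by (auto simp: subset_iff)
    moreover have "U = insert a ?V"
      using U unfolding spanning_subsets_def by auto
    ultimately show "U \<in> insert a ` (\<Union>b\<in>{a<..e}. spanning_subsets b e)" by blast
  qed
qed (auto simp: spanning_subsets_def)

lemma gap_weight_insert:
  assumes "a < b" and V: "V \<in> spanning_subsets b e"
  shows "gap_weight f (insert a V) = f (b - a) * gap_weight f V"
proof -
  have fin: "finite V" and aV: "a \<notin> V" and "a < e"
    using assms finite_if_spanning_subset[OF V] unfolding spanning_subsets_def by auto
  have "Max (insert a V) = max a (Max V)"
    using fin V by (intro Max_insert) (auto simp: spanning_subsets_def)
  then have "Max (insert a V) = Max V"
    using Max_spanning_subset[OF V] \<open>a < e\<close> by simp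
  then have remove: "insert a V - {Max (insert a V)} = insert a (V - {Max V})"
    using Max_spanning_subset[OF V] \<open>a < e\<close> by auto
  have "next_gap (insert a V) a = b - a"
    unfolding next_gap_def
  proof (rule Least_equality)
    fix t assume "0 < t \<and> a + t \<in> insert a V"
    then show "b - a \<le> t" using V unfolding spanning_subsets_def by (auto simp: subset_iff)
  qed (use assms in \<open>auto simp: spanning_subsets_def\<close>)
  moreover have "next_gap (insert a V) s = next_gap V s" if "s \<in> V" for s
  proof -
    have "a < s" using that V \<open>a < b\<close> by (auto simp: spanning_subsets_def subset_iff)
    then have "\<And>t. (0 < t \<and> s + t \<in> insert a V) = (0 < t \<and> s + t \<in> V)" by auto
    then show ?thesis unfolding next_gap_def by simp
  qed
  ultimately show ?thesis
    unfolding gap_weight_def remove using fin aV by simp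
qed

lemma sum_gap_weight_spanning_subsets:
  fixes f L :: "nat \<Rightarrow> 'a::comm_semiring_1"
  assumes L0: "L 0 = 1" and L_rec: "\<And>n. 0 < n \<Longrightarrow> L n = (\<Sum>k=1..n. f k * L (n - k))"
  shows "(\<Sum>U\<in>spanning_subsets a (a + n). gap_weight f U) = L n"
proof (induction n arbitrary: a rule: less_induct)
  case (less n)
  show ?case
  proof (cases "n = 0")
    case True
    then show ?thesis by (simp add: gap_weight_def L0)
  next
    case False
    let ?e = "a + n"
    let ?W = "\<Union>b\<in>{a<..?e}. spanning_subsets b ?e"
    have "a \<notin> V" if "V \<in> ?W" for V
      using that by (auto simp: spanning_subsets_def)
    then have "inj_on (insert a) ?W"
      by (meson inj_onI insert_ident)
    have "a < ?e" using False by simp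
    have "(\<Sum>U\<in>spanning_subsets a ?e. gap_weight f U) = (\<Sum>V\<in>?W. gap_weight f (insert a V))"
      unfolding spanning_subsets_insert_eq[OF \<open>a < ?e\<close>]
      by (rule sum.reindex_cong[OF \<open>inj_on (insert a) ?W\<close>]) simp_all
    also have "\<dots> = (\<Sum>b\<in>{a<..?e}. \<Sum>V\<in>spanning_subsets b ?e. gap_weight f (insert a V))"
      by (rule sum.UNION_disjoint)
        (auto simp: finite_spanning_subsets dest: Min_spanning_subset)
    also have "\<dots> = (\<Sum>b\<in>{a<..?e}. f (b - a) * L (?e - b))"
    proof (intro sum.cong refl)
      fix b assume b: "b \<in> {a<..?e}"
      then have "(\<Sum>V\<in>spanning_subsets b ?e. gap_weight f (insert a V))
          = f (b - a) * (\<Sum>V\<in>spanning_subsets b ?e. gap_weight f V)"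
        unfolding sum_distrib_left by (intro sum.cong refl) (simp_all add: gap_weight_insert)
      also have "\<dots> = f (b - a) * L (?e - b)"
        using less.IH[of "?e - b" b] b by auto
      finally show "(\<Sum>V\<in>spanning_subsets b ?e. gap_weight f (insert a V)) = f (b - a) * L (?e - b)" .
    qed
    also have "\<dots> = (\<Sum>k=1..n. f k * L (n - k))"
      using sum.shift_bounds_cl_nat_ivl[of "\<lambda>b. f (b - a) * L (?e - b)" 1 a n]
      by (simp add: atLeastSucAtMost_greaterThanAtMost add.commute)
    also have "\<dots> = L n"
      using L_rec False by simp
    finally show ?thesis .
  qed
qed

lemma inj_on_add_mod_interval:
  fixes s d :: nat
  assumes "b < a + d"
  shows "inj_on (\<lambda>j. (s + j) mod d) {a..b}"
proof -
  have eq: "x = y" if "x \<in> {a..b}" "y \<in> {a..b}" "x \<le> y" "(s + x) mod d = (s + y) mod d" for x y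
  proof -
    have "d dvd y - x"
      using that mod_eq_dvd_iff_nat[of "s + x" "s + y" d] by simp
    moreover have "y - x < d"
      using that assms by auto
    ultimately have "\<not> 0 < y - x"
      using nat_dvd_not_less by blast
    then show "x = y"
      using \<open>x \<le> y\<close> by simp
  qed
  show ?thesis
  proof (rule inj_onI)
    fix x y assume "x \<in> {a..b}" "y \<in> {a..b}" "(s + x) mod d = (s + y) mod d"
    then show "x = y" using eq[of x y] eq[of y x] by (cases "x \<le> y") auto
  qed
qed

lemma cyc_gap_le:
  assumes "S \<subseteq> {..<d}" and "s \<in> S"
  shows "cyc_gap d S s \<le> d"
  unfolding cyc_gap_def using assms by (intro Least_le) auto

lemma card_cyc_part:
  assumes "S \<subseteq> {..<d}" and "s \<in> S"
  shows "card (cyc_part d S s) = cyc_gap d S s"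
proof -
  have "cyc_part d S s = (\<lambda>j. (s + j) mod d) ` {1..cyc_gap d S s}"
    unfolding cyc_part_def by auto
  moreover have "inj_on (\<lambda>j. (s + j) mod d) {1..cyc_gap d S s}"
    using cyc_gap_le[OF assms] by (intro inj_on_add_mod_interval) simp
  ultimately show ?thesis
    by (simp add: card_image)
qed

lemma cyc_gap_eq_next_gap:
  assumes S: "S \<subseteq> {..<d}" and "s \<in> S" and "s < Max S"
  shows "cyc_gap d S s = next_gap S s"
proof -
  have fin: "finite S" using S finite_subset by blast
  let ?g = "next_gap S s"
  have "0 < Max S - s \<and> s + (Max S - s) \<in> S"
    using assms Max_in[OF fin] by auto
  then have g: "0 < ?g \<and> s + ?g \<in> S"
    unfolding next_gap_def by (rule LeastI)
  have below: "\<not> (0 < t \<and> s + t \<in> S)" if "t < ?g" for t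
    using that unfolding next_gap_def by (rule not_less_Least)
  have "s + ?g < d" using g S by auto
  show ?thesis unfolding cyc_gap_def
  proof (rule Least_equality)
    show "0 < ?g \<and> (s + ?g) mod d \<in> S" using g \<open>s + ?g < d\<close> by simp
  next
    fix t assume t: "0 < t \<and> (s + t) mod d \<in> S"
    show "?g \<le> t"
    proof (rule ccontr)
      assume "\<not> ?g \<le> t"
      then show False using below[of t] t \<open>s + ?g < d\<close> by simp
    qed
  qed
qed

lemma cyc_gap_Max:
  assumes S: "S \<subseteq> {..<d}" and "S \<noteq> {}"
  shows "cyc_gap d S (Max S) = d + Min S - Max S"
proof -
  have fin: "finite S" using S finite_subset by blast
  have MS: "Max S \<in> S" "Min S \<in> S" using fin assms by auto
  have Md: "Max S < d" "Min S \<le> Max S" using MS S fin by auto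
  show ?thesis unfolding cyc_gap_def
  proof (rule Least_equality)
    show "0 < d + Min S - Max S \<and> (Max S + (d + Min S - Max S)) mod d \<in> S"
      using Md MS by simp
  next
    fix t assume t: "0 < t \<and> (Max S + t) mod d \<in> S"
    show "d + Min S - Max S \<le> t"
    proof (rule ccontr)
      assume "\<not> d + Min S - Max S \<le> t"
      then have lt: "Max S + t < d + Min S" using Md by simp
      show False
      proof (cases "Max S + t < d")
        case True
        then show False using t Max_ge[OF fin, of "Max S + t"] by simp
      next
        case False
        have "Max S + t - d < d" using lt Md by linarith
        then have "(Max S + t) mod d = Max S + t - d" using False by (simp add: le_mod_geq)
        then have "Max S + t - d \<in> S" using t by simp
        then show False using Min_le[OF fin] lt False by fastforce
      qed
    qed
  qed
qed

lemma prod_cyc_part_eq: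
  fixes f :: "nat \<Rightarrow> 'a::comm_semiring_1"
  assumes S: "S \<subseteq> {..<d}" and "S \<noteq> {}"
  shows "(\<Prod>s\<in>S. f (card (cyc_part d S s))) = f (d + Min S - Max S) * gap_weight f S"
proof -
  have fin: "finite S" using S finite_subset by blast
  have "(\<Prod>s\<in>S. f (card (cyc_part d S s))) = (\<Prod>s\<in>S. f (cyc_gap d S s))"
    using card_cyc_part[OF S] by simp
  also have "\<dots> = f (cyc_gap d S (Max S)) * (\<Prod>s\<in>S - {Max S}. f (cyc_gap d S s))"
    using fin \<open>S \<noteq> {}\<close> by (intro prod.remove) auto
  also have "(\<Prod>s\<in>S - {Max S}. f (cyc_gap d S s)) = gap_weight f S"
    unfolding gap_weight_def using fin
    by (intro prod.cong refl) (auto simp: cyc_gap_eq_next_gap[OF S] order.not_eq_order_implies_strict)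
  finally show ?thesis
    by (simp add: cyc_gap_Max[OF assms])
qed

lemma cyclic_compositions_eq_UN:
  "cyclic_compositions d = (\<Union>M\<in>{..<d}. \<Union>m\<in>{..M}. spanning_subsets m M)"
proof
  show "cyclic_compositions d \<subseteq> (\<Union>M\<in>{..<d}. \<Union>m\<in>{..M}. spanning_subsets m M)"
  proof
    fix S assume "S \<in> cyclic_compositions d"
    then have S: "S \<subseteq> {..<d}" "S \<noteq> {}" unfolding cyclic_compositions_def by auto
    then have "finite S" using finite_subset by blast
    then have "S \<in> spanning_subsets (Min S) (Max S)" "Max S < d" "Min S \<le> Max S"
      using S by (auto simp: spanning_subsets_def)
    then show "S \<in> (\<Union>M\<in>{..<d}. \<Union>m\<in>{..M}. spanning_subsets m M)" by blast
  qed
qed (auto simp: spanning_subsets_def cyclic_compositions_def)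

lemma sum_lessThan_sum_atMost_diff:
  fixes g :: "nat \<Rightarrow> 'a::comm_semiring_1"
  shows "(\<Sum>M<N. \<Sum>m\<le>M. g (M - m)) = (\<Sum>n\<le>N. of_nat (N - n) * g n)"
proof (induction N)
  case (Suc N)
  have "(\<Sum>m\<le>N. g (N - m)) = (\<Sum>n\<le>N. g n)"
    using sum.atLeastAtMost_rev[of "\<lambda>m. g (N - m)" 0 N] by (simp add: atLeast0AtMost)
  with Suc show ?case
    by (simp add: sum.distrib[symmetric] Suc_diff_le algebra_simps)
qed simp

lemma sum_cyclic_compositions_prod:
  fixes f L :: "nat \<Rightarrow> 'a::comm_semiring_1"
  assumes L0: "L 0 = 1" and L_rec: "\<And>n. 0 < n \<Longrightarrow> L n = (\<Sum>k=1..n. f k * L (n - k))"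
  shows "(\<Sum>S\<in>cyclic_compositions d. \<Prod>s\<in>S. f (card (cyc_part d S s)))
       = (\<Sum>i=0..d. of_nat i * f i * L (d - i))"
proof -
  let ?w = "\<lambda>S. \<Prod>s\<in>S. f (card (cyc_part d S s))"
  have "(\<Sum>S\<in>cyclic_compositions d. ?w S) = (\<Sum>M<d. \<Sum>S\<in>(\<Union>m\<le>M. spanning_subsets m M). ?w S)"
    unfolding cyclic_compositions_eq_UN
    by (rule sum.UNION_disjoint) (auto simp: finite_spanning_subsets dest: Max_spanning_subset)
  also have "\<dots> = (\<Sum>M<d. \<Sum>m\<le>M. \<Sum>S\<in>spanning_subsets m M. ?w S)"
    by (intro sum.cong refl sum.UNION_disjoint)
      (auto simp: finite_spanning_subsets dest: Min_spanning_subset)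
  also have "\<dots> = (\<Sum>M<d. \<Sum>m\<le>M. f (d - (M - m)) * L (M - m))"
  proof (intro sum.cong refl)
    fix M m assume "M \<in> {..<d}" "m \<in> {..M}"
    have "?w S = f (d + m - M) * gap_weight f S" if S: "S \<in> spanning_subsets m M" for S
    proof -
      have "S \<subseteq> {..<d}" "S \<noteq> {}"
        using S \<open>M \<in> {..<d}\<close> by (auto simp: spanning_subsets_def subset_iff)
      then show ?thesis
        using prod_cyc_part_eq[of S d f] Min_spanning_subset[OF S] Max_spanning_subset[OF S] by simp
    qed
    then show "(\<Sum>S\<in>spanning_subsets m M. ?w S) = f (d - (M - m)) * L (M - m)"
      using sum_gap_weight_spanning_subsets[OF L0 L_rec, of m "M - m"] \<open>m \<in> {..M}\<close>
      by (simp add: sum_distrib_left[symmetric])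
  qed
  also have "\<dots> = (\<Sum>n\<le>d. of_nat (d - n) * (f (d - n) * L n))"
    by (rule sum_lessThan_sum_atMost_diff)
  also have "\<dots> = (\<Sum>i=0..d. of_nat i * f i * L (d - i))"
    using sum.atLeastAtMost_rev[of "\<lambda>n. of_nat (d - n) * (f (d - n) * L n)" 0 d]
    by (simp add: atLeast0AtMost mult.assoc)
  finally show ?thesis .
qed

theorem lemma3p3:
  fixes d :: nat
  assumes "d \<ge> 1"
  shows "(2*d) choose d = (\<Sum>S\<in>cyclic_compositions d. \<Prod>s\<in>S. alpha (card (cyc_part d S s)))"
proof -
  define L :: "real fps" where "L = inverse (1 - alpha_fps)"
  have L0: "L $ 0 = 1"
    unfolding L_def by (rule inverse_one_minus_fps_nth) (simp add: alpha_fps_nth)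
  have L_rec: "L $ n = (\<Sum>k=1..n. real (alpha k) * L $ (n - k))" if "0 < n" for n
    using inverse_one_minus_fps_nth(2)[of alpha_fps n] that unfolding L_def
    by (simp add: alpha_fps_nth)
  have "real ((2*d) choose d) = (central_binomial_fps - 1) $ d"
    using assms by (simp add: central_binomial_fps_def)
  also have "\<dots> = (\<Sum>i=0..d. of_nat i * alpha_fps $ i * L $ (d - i))"
    unfolding central_binomial_fps_minus_one L_def by (rule fps_X_deriv_mult_nth)
  also have "\<dots> = (\<Sum>i=0..d. of_nat i * real (alpha i) * L $ (d - i))"
    by (intro sum.cong refl) (simp add: alpha_fps_nth)
  also have "\<dots> = (\<Sum>S\<in>cyclic_compositions d. \<Prod>s\<in>S. real (alpha (card (cyc_part d S s))))"
    by (rule sum_cyclic_compositions_prod[OF L0 L_rec, symmetric])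
  also have "\<dots> = real (\<Sum>S\<in>cyclic_compositions d. \<Prod>s\<in>S. alpha (card (cyc_part d S s)))"
    by simp
  finally show ?thesis
    by (simp only: of_nat_eq_iff)
qed

end
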